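(* Consider the algorithm described in the context applied to the problem described there. (i) If the algorithm terminates at iteration $k$ because $J_k^Tc_k=0$ and $c_k\neq 0$, then $x_k$ is an infeasible stationary point, i.e., $c_k\neq0$ and $J_k^Tc_k=0$. (ii) If the algorithm terminates at iteration $k$ because $s_k=0$, then $x_k$ is a first-order KKT point of the problem, i.e., $c(x_k)=0$ and there exist $y\in\mathbb{R}^m$ and $g_r\in\partial r(x_k)$ with $\nabla f(x_k)+g_r-J(x_k)^Ty=0$.
   Context: Problem: $\min_{x\in\mathbb{R}^n} f(x)+r(x)$ subject to $c(x)=0$, where $f:\mathbb{R}^n\to\mathbb{R}$ and $c:\mathbb{R}^n\to\mathbb{R}^m$ ($m\le n$) are continuously differentiable and $r:\mathbb{R}^n\to\mathbb{R}_{\ge 0}$ is convex. Write $g(x)=\nabla f(x)$, $J(x)=\nabla c(x)^T$, and $f_k=f(x_k)$, $g_k=g(x_k)$, $c_k=c(x_k)$, $J_k=J(x_k)$, $r_k=r(x_k)$. All norms are Euclidean. Algorithm: inputs $x_0$, $\alpha_0>0$, $\tau_{-1}>0$; constants $\kappa_v>0$, $\sigma_c,\epsilon_\tau,\xi,\eta\in(0,1)$, $\sigma_u\in(0,1/2]$, $\bar\sigma_u:=\sigma_u+\tfrac12$. For $k=0,1,\dots$: 1. If $J_k^Tc_k\ne0$, compute $v_k$ with $v_k\in\mathrm{Range}(J_k^T)$, $\|v_k\|_2\le\kappa_v\alpha_k\|J_k^Tc_k\|_2$, $\|c_k+J_kv_k\|_2\le\|c_k+J_kv_k^c\|_2$,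 where $v_k^c=-\beta_k^cJ_k^Tc_k$ with $\beta_k^c$ minimizing $\tfrac12\|c_k-\beta J_kJ_k^Tc_k\|_2^2$ over $0\le\beta\le\kappa_v\alpha_k$. Otherwise set $v_k=0$, and if $c_k\ne0$ terminate returning $x_k$. 2. Let $u_k$ be the unique minimizer of $g_k^Tu+\tfrac1{2\alpha_k}\|u\|_2^2+r(x_k+v_k+u)$ subject to $J_ku=0$; set $s_k=v_k+u_k$. If $s_k=0$, terminate returning $x_k$. 3. Let $D_k:=g_k^Ts_k+\bar\sigma_u\|s_k\|_2^2/\alpha_k+r(x_k+s_k)-r_k$; $\tau_{k,\mathrm{trial}}=\infty$ if $D_k\le0$, else $\tau_{k,\mathrm{trial}}=(1-\sigma_c)(\|c_k\|_2-\|c_k+J_kv_k\|_2)/D_k$. Set $\tau_k=\tau_{k-1}$ if $\tau_{k-1}\le\tau_{k,\mathrm{trial}}$, else $\tau_k=\min\{(1-\epsilon_\tau)\tau_{k-1},\tau_{k,\mathrm{trial}}\}$. 4. With $\Delta q_k(s,\tau):=-\tau(g_k^Ts+\tfrac1{2\alpha_k}\|s\|_2^2+r(x_k+s)-r_k)+\|c_k\|_2-\|c_k+J_ks\|_2$ and merit function $\Phi_\tau(x)=\tau(f(x)+r(x))+\|c(x)\|_2$: if $\Phi_{\tau_k}(x_k+s_k)\le\Phi_{\tau_k}(x_k)-\eta\Delta q_k(s_k,\tau_k)$ set $x_{k+1}=x_k+s_k$, $\alpha_{k+1}=\alpha_k$; else $x_{k+1}=x_k$, $\alpha_{k+1}=\xi\alpha_k$.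 Standing assumption: there is an open convex set $\mathcal X$ containing all iterates and trial points on which $f$ is bounded below, $\nabla f$ is bounded and Lipschitz, $c$ and $J$ are bounded, $J$ is Lipschitz, and the subdifferential of $r$ is bounded. *)

theory Defs
  imports "HOL-Analysis.Analysis"
begin

definition subdiff :: "(real^'n \<Rightarrow> real) \<Rightarrow> real^'n \<Rightarrow> (real^'n) set" where
  "subdiff r x = {d. \<forall>y. r y \<ge> r x + d \<bullet> (y - x)}"

text \<open>Step 1 of the algorithm at an iterate (x_k, alpha_k): conditions on the
  normal step v_k, given the constraint value ck = c(x_k) and Jacobian Jk = J(x_k).\<close>
definition normal_step_ok ::
  "real \<Rightarrow> real \<Rightarrow> real^'m \<Rightarrow> real^'n^'m \<Rightarrow> real^'n \<Rightarrow> bool" where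
  "normal_step_ok kappa_v alpha ck Jk v \<longleftrightarrow>
     (if transpose Jk *v ck \<noteq> 0 then
        v \<in> range (\<lambda>w. transpose Jk *v w) \<and>
        norm v \<le> kappa_v * alpha * norm (transpose Jk *v ck) \<and>
        (\<exists>beta_c. 0 \<le> beta_c \<and> beta_c \<le> kappa_v * alpha \<and>
           (\<forall>beta. 0 \<le> beta \<and> beta \<le> kappa_v * alpha \<longrightarrow>
              (1/2) * (norm (ck - beta *\<^sub>R (Jk *v (transpose Jk *v ck))))\<^sup>2
              \<ge> (1/2) * (norm (ck - beta_c *\<^sub>R (Jk *v (transpose Jk *v ck))))\<^sup>2) \<and>
           norm (ck + Jk *v v) \<le> norm (ck + Jk *v (- (beta_c *\<^sub>R (transpose Jk *v ck)))))
      else v = 0)"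

definition tangential_step_ok ::
  "(real^'n \<Rightarrow> real) \<Rightarrow> real \<Rightarrow> real^'n \<Rightarrow> real^'n \<Rightarrow> real^'n^'m \<Rightarrow> real^'n \<Rightarrow> real^'n \<Rightarrow> bool" where
  "tangential_step_ok r alpha x gk Jk v u \<longleftrightarrow>
     Jk *v u = 0 \<and>
     (\<forall>w. Jk *v w = 0 \<longrightarrow>
        gk \<bullet> u + (norm u)\<^sup>2 / (2 * alpha) + r (x + v + u)
        \<le> gk \<bullet> w + (norm w)\<^sup>2 / (2 * alpha) + r (x + v + w))"

end

theory Submission
  imports Defs
begin

(* If s = v + u = 0 then J v = - J u = 0, so the normal step does not reduce the linearized
   infeasibility norm (c + J v) at all. But it does at least as well as the Cauchy step along
   -J^T c, which reduces it strictly whenever J^T c \<noteq> 0; hence J^T c = 0, so c = 0 and v = 0.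
   Then w = 0 minimizes g^T w + norm w^2 / (2 alpha) + r (x + w) over the null space N of J.
   Along a ray t w the quadratic term is of order t^2, so by convexity 0 also minimizes
   phi w = g^T w + r (x + w) over N. Separating the epigraph of phi from N \<times> (-\<infinity>, phi 0)
   yields a subgradient q of phi at 0 that is orthogonal to N, i.e. q = J^T y, and q - g is a
   subgradient of r at x. *)

lemma range_transpose_eq_orthogonal_comp_kernel:
  fixes J :: "real^'n^'m"
  shows "range (\<lambda>y. transpose J *v y) = {w. J *v w = 0}\<^sup>\<bottom>"
proof -
  have "{w. J *v w = 0} = (range (\<lambda>y. transpose J *v y))\<^sup>\<bottom>"
    using ker_orthogonal_comp_adjoint[OF matrix_vector_mul_linear[of J]]
    by (simp add: adjoint_matrix vimage_def)
  moreover have "subspace (range (\<lambda>y. transpose J *v y))"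
    by (rule linear_subspace_image[OF matrix_vector_mul_linear subspace_UNIV])
  ultimately show ?thesis
    by (simp add: orthogonal_comp_self)
qed

lemma exists_scaleR_norm_diff_less:
  fixes c d :: "'a::real_inner"
  assumes "0 < c \<bullet> d" and "0 < b"
  obtains \<beta> where "0 < \<beta>" "\<beta> \<le> b" "norm (c - \<beta> *\<^sub>R d) < norm c"
proof
  define \<beta> where "\<beta> = min b ((c \<bullet> d) / (1 + d \<bullet> d))"
  have pos: "0 < 1 + d \<bullet> d"
    by (intro add_pos_nonneg) simp_all
  show "0 < \<beta>" "\<beta> \<le> b"
    using assms pos by (simp_all add: \<beta>_def)
  have "\<beta> * (d \<bullet> d) \<le> (c \<bullet> d) / (1 + d \<bullet> d) * (d \<bullet> d)"
    unfolding \<beta>_def by (intro mult_right_mono) auto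
  also have "\<dots> < c \<bullet> d"
    using assms(1) by (simp add: pos_divide_less_eq[OF pos] distrib_left)
  finally have "\<beta> * (d \<bullet> d) < c \<bullet> d" .
  then have "(norm (c - \<beta> *\<^sub>R d))\<^sup>2 < (norm c)\<^sup>2"
    using \<open>0 < \<beta>\<close> assms(1)
    by (simp add: power2_norm_eq_inner inner_diff_left inner_diff_right inner_commute
        algebra_simps mult_strict_left_mono)
  then show "norm (c - \<beta> *\<^sub>R d) < norm c"
    by (rule power2_less_imp_less) simp
qed

lemma normal_step_ok_norm_less:
  fixes Jk :: "real^'n^'m"
  assumes "normal_step_ok kappa_v alpha ck Jk v" "transpose Jk *v ck \<noteq> 0" "0 < kappa_v * alpha"
  shows "norm (ck + Jk *v v) < norm ck"
proof -
  define d where "d = Jk *v (transpose Jk *v ck)"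
  obtain beta_c where
    cauchy_min: "\<And>beta. 0 \<le> beta \<Longrightarrow> beta \<le> kappa_v * alpha \<Longrightarrow>
       norm (ck - beta_c *\<^sub>R d) \<le> norm (ck - beta *\<^sub>R d)"
    and below_cauchy: "norm (ck + Jk *v v) \<le> norm (ck - beta_c *\<^sub>R d)"
    using assms(1,2) unfolding normal_step_ok_def d_def
    by (auto simp: matrix_vector_mult_scaleR linear_neg[OF matrix_vector_mul_linear])
  have "0 < ck \<bullet> d"
    using assms(2) by (simp add: d_def dot_lmul_matrix[symmetric])
  then obtain beta where "0 < beta" "beta \<le> kappa_v * alpha" "norm (ck - beta *\<^sub>R d) < norm ck"
    using exists_scaleR_norm_diff_less assms(3) by blast
  then have "norm (ck - beta_c *\<^sub>R d) < norm ck"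
    using cauchy_min[of beta] by simp
  with below_cauchy show ?thesis
    by linarith
qed

lemma convex_on_translate:
  fixes f :: "'a::real_vector \<Rightarrow> real"
  assumes "convex_on UNIV f"
  shows "convex_on UNIV (\<lambda>w. f (x + w))"
proof (rule convex_onI[OF _ convex_UNIV])
  fix t :: real and a b :: 'a
  assume "0 < t" "t < 1"
  have "x + ((1 - t) *\<^sub>R a + t *\<^sub>R b) = (1 - t) *\<^sub>R (x + a) + t *\<^sub>R (x + b)"
    by (simp add: algebra_simps)
  then show "f (x + ((1 - t) *\<^sub>R a + t *\<^sub>R b)) \<le> (1 - t) * f (x + a) + t * f (x + b)"
    using convex_onD[OF assms, of t] \<open>0 < t\<close> \<open>t < 1\<close> by simp
qed

lemma convex_on_min_of_quadratic_perturbation: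
  fixes \<phi> :: "'a::real_normed_vector \<Rightarrow> real"
  assumes "convex_on S \<phi>" "0 \<in> S"
    and min: "\<And>w. w \<in> S \<Longrightarrow> \<phi> 0 \<le> \<phi> w + K * (norm w)\<^sup>2"
    and "w \<in> S"
  shows "\<phi> 0 \<le> \<phi> w"
proof (rule tendsto_lowerbound)
  show "((\<lambda>t. \<phi> w + t * (K * (norm w)\<^sup>2)) \<longlongrightarrow> \<phi> w) (at_right 0)"
    by (auto intro!: tendsto_eq_intros)
  have "\<phi> 0 \<le> \<phi> w + t * (K * (norm w)\<^sup>2)" if "0 < t" "t < 1" for t
  proof -
    have "t *\<^sub>R w = (1 - t) *\<^sub>R 0 + t *\<^sub>R w"
      by simp
    then have "t *\<^sub>R w \<in> S" and "\<phi> (t *\<^sub>R w) \<le> (1 - t) * \<phi> 0 + t * \<phi> w"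
      using that assms convex_onD[OF assms(1), of t 0 w]
        convexD[OF convex_on_imp_convex[OF assms(1)], of 0 w "1 - t" t]
      by auto
    moreover have "\<phi> 0 \<le> \<phi> (t *\<^sub>R w) + t * (t * (K * (norm w)\<^sup>2))"
      using min[OF \<open>t *\<^sub>R w \<in> S\<close>] that by (simp add: power2_eq_square algebra_simps)
    ultimately have "t * \<phi> 0 \<le> t * (\<phi> w + t * (K * (norm w)\<^sup>2))"
      by (simp add: algebra_simps)
    then show ?thesis
      using \<open>0 < t\<close> by simp
  qed
  then show "\<forall>\<^sub>F t in at_right 0. \<phi> 0 \<le> \<phi> w + t * (K * (norm w)\<^sup>2)"
    using eventually_at_right_real[of 0 1] by (auto elim: eventually_mono)
qed simp

lemma orthogonal_comp_if_inner_bounded_below: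
  assumes "subspace S" "\<And>w. w \<in> S \<Longrightarrow> b \<le> p \<bullet> w"
  shows "p \<in> S\<^sup>\<bottom>"
  unfolding orthogonal_comp_def orthogonal_def
proof (intro CollectI ballI)
  fix w assume "w \<in> S"
  have "b \<le> a * (p \<bullet> w)" for a
    using assms(2)[of "a *\<^sub>R w"] subspace_scale[OF assms(1) \<open>w \<in> S\<close>] by simp
  from this[of "(b - 1) / (p \<bullet> w)"] show "w \<bullet> p = 0"
    by (cases "p \<bullet> w = 0") (simp_all add: inner_commute)
qed

lemma separating_hyperplane_epigraph_below_subspace:
  fixes \<phi> :: "'a::euclidean_space \<Rightarrow> real"
  assumes "convex_on UNIV \<phi>" "subspace S" "\<And>w. w \<in> S \<Longrightarrow> \<phi> 0 \<le> \<phi> w"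
  obtains p \<sigma> b where "(p, \<sigma>) \<noteq> 0"
    "\<And>w t. \<phi> w \<le> t \<Longrightarrow> p \<bullet> w + \<sigma> * t \<le> b"
    "\<And>w s. w \<in> S \<Longrightarrow> s < \<phi> 0 \<Longrightarrow> b \<le> p \<bullet> w + \<sigma> * s"
proof -
  have "convex (epigraph UNIV \<phi>)" "convex (S \<times> {..<\<phi> 0})"
    using assms by (simp_all add: convex_epigraphI convex_Times subspace_imp_convex)
  moreover have "epigraph UNIV \<phi> \<inter> S \<times> {..<\<phi> 0} = {}"
    using assms(3) by (force simp: epigraph_def)
  moreover have "(0, \<phi> 0) \<in> epigraph UNIV \<phi>" "(0, \<phi> 0 - 1) \<in> S \<times> {..<\<phi> 0}"
    using subspace_0[OF assms(2)] by (auto simp: epigraph_def)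
  ultimately show thesis
    using that separating_hyperplane_sets[of "epigraph UNIV \<phi>" "S \<times> {..<\<phi> 0}"]
    by (fastforce simp: epigraph_def inner_Pair)
qed

lemma convex_on_min_on_subspace_imp_orthogonal_subgradient:
  fixes \<phi> :: "'a::euclidean_space \<Rightarrow> real"
  assumes "convex_on UNIV \<phi>" "subspace S" "\<And>w. w \<in> S \<Longrightarrow> \<phi> 0 \<le> \<phi> w"
  obtains q where "q \<in> S\<^sup>\<bottom>" "\<And>w. \<phi> 0 + q \<bullet> w \<le> \<phi> w"
proof -
  obtain p \<sigma> b where "(p, \<sigma>) \<noteq> 0"
    and epi: "\<And>w t. \<phi> w \<le> t \<Longrightarrow> p \<bullet> w + \<sigma> * t \<le> b"
    and sub: "\<And>w s. w \<in> S \<Longrightarrow> s < \<phi> 0 \<Longrightarrow> b \<le> p \<bullet> w + \<sigma> * s"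
    using separating_hyperplane_epigraph_below_subspace[OF assms] by blast
  have "p \<in> S\<^sup>\<bottom>"
    using sub[of _ "\<phi> 0 - 1"]
    by (intro orthogonal_comp_if_inner_bounded_below[OF assms(2), of "b - \<sigma> * (\<phi> 0 - 1)"])
      (simp add: algebra_simps)
  then have sub0: "b \<le> \<sigma> * s" if "s < \<phi> 0" for s
    using sub[OF subspace_0[OF assms(2)] that] by simp
  have "\<sigma> < 0"
  proof (rule ccontr)
    assume "\<not> \<sigma> < 0"
    with epi[of 0 "\<phi> 0"] sub0[of "\<phi> 0 - 1"] have "\<sigma> = 0"
      by (simp add: algebra_simps)
    with epi[of p "\<phi> p"] sub0[of "\<phi> 0 - 1"] have "p \<bullet> p \<le> 0"
      by simp
    with inner_ge_zero[of p] have "p \<bullet> p = 0"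
      by linarith
    with \<open>(p, \<sigma>) \<noteq> 0\<close> \<open>\<sigma> = 0\<close> show False
      by (simp add: zero_prod_def)
  qed
  define q where "q = (- 1 / \<sigma>) *\<^sub>R p"
  show thesis
  proof
    show "q \<in> S\<^sup>\<bottom>"
      unfolding q_def by (rule subspace_scale[OF subspace_orthogonal_comp \<open>p \<in> S\<^sup>\<bottom>\<close>])
    fix w
    have "s \<le> \<phi> w - q \<bullet> w" if "s < \<phi> 0" for s
    proof -
      have "p \<bullet> w + \<sigma> * \<phi> w \<le> \<sigma> * s"
        using epi[of w "\<phi> w"] sub0[OF that] by simp
      then show ?thesis
        using \<open>\<sigma> < 0\<close> by (simp add: q_def field_simps)
    qed
    then show "\<phi> 0 + q \<bullet> w \<le> \<phi> w"
      using dense_le[of "\<phi> 0" "\<phi> w - q \<bullet> w"] by simp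
  qed
qed

lemma tangential_step_ok_zero_imp_stationary:
  fixes Jk :: "real^'n^'m"
  assumes "convex_on UNIV r" "tangential_step_ok r alpha x gk Jk 0 0"
  shows "\<exists>y. \<exists>g_r \<in> subdiff r x. gk + g_r - transpose Jk *v y = 0"
proof -
  define \<phi> where "\<phi> = (\<lambda>w. gk \<bullet> w + r (x + w))"
  let ?N = "{w. Jk *v w = 0}"
  have N: "subspace ?N"
    by (rule linear_subspace_kernel[OF matrix_vector_mul_linear])
  have "convex_on UNIV (\<lambda>w. gk \<bullet> w)"
    by (rule convex_onI) (simp_all add: inner_add_right)
  then have "convex_on UNIV \<phi>"
    unfolding \<phi>_def by (rule convex_on_add[OF _ convex_on_translate[OF assms(1)]])
  have "\<phi> 0 \<le> \<phi> w" if "w \<in> ?N" for w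
  proof (rule convex_on_min_of_quadratic_perturbation[where K = "1 / (2 * alpha)"])
    show "convex_on ?N \<phi>"
      using convex_on_subset[OF \<open>convex_on UNIV \<phi>\<close> subset_UNIV subspace_imp_convex[OF N]] .
    show "\<phi> 0 \<le> \<phi> v + 1 / (2 * alpha) * (norm v)\<^sup>2" if "v \<in> ?N" for v
    proof -
      have "r x \<le> gk \<bullet> v + (norm v)\<^sup>2 / (2 * alpha) + r (x + v)"
        using assms(2) that by (simp add: tangential_step_ok_def)
      then show ?thesis
        by (simp add: \<phi>_def)
    qed
  qed (use that in simp_all)
  then obtain q where "q \<in> ?N\<^sup>\<bottom>" and q: "\<And>w. \<phi> 0 + q \<bullet> w \<le> \<phi> w"
    using convex_on_min_on_subspace_imp_orthogonal_subgradient[OF \<open>convex_on UNIV \<phi>\<close> N] by blast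
  have "q \<in> range (\<lambda>y. transpose Jk *v y)"
    using \<open>q \<in> ?N\<^sup>\<bottom>\<close> by (simp only: range_transpose_eq_orthogonal_comp_kernel)
  then obtain y where y: "q = transpose Jk *v y"
    by blast
  have "r x + (q - gk) \<bullet> (z - x) \<le> r z" for z
    using q[of "z - x"] by (simp add: \<phi>_def inner_diff_left)
  then have "q - gk \<in> subdiff r x"
    by (simp add: subdiff_def)
  moreover have "gk + (q - gk) - transpose Jk *v y = 0"
    by (simp add: y)
  ultimately show ?thesis
    by blast
qed

theorem theorem3p2:
  fixes f :: "real^'n \<Rightarrow> real" and g :: "real^'n \<Rightarrow> real^'n"
    and c :: "real^'n \<Rightarrow> real^'m" and J :: "real^'n \<Rightarrow> real^'n^'m"
    and r :: "real^'n \<Rightarrow> real"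
    and kappa_v alpha_k :: real and x_k v_k u_k :: "real^'n"
  assumes m_le_n: "CARD('m) \<le> CARD('n)"
    and f_diff: "\<And>x. (f has_derivative (\<lambda>h. g x \<bullet> h)) (at x)" and g_cont: "continuous_on UNIV g"
    and c_diff: "\<And>x. (c has_derivative (\<lambda>h. J x *v h)) (at x)" and J_cont: "continuous_on UNIV J"
    and r_convex: "convex_on UNIV r" and r_nonneg: "\<And>x. r x \<ge> 0"
    and kappa_pos: "kappa_v > 0" and alpha_pos: "alpha_k > 0"
    and step1: "normal_step_ok kappa_v alpha_k (c x_k) (J x_k) v_k"
  shows "(transpose (J x_k) *v c x_k = 0 \<and> c x_k \<noteq> 0 \<longrightarrow>
            c x_k \<noteq> 0 \<and> transpose (J x_k) *v c x_k = 0)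
       \<and> ((transpose (J x_k) *v c x_k \<noteq> 0 \<or> c x_k = 0) \<and>
          tangential_step_ok r alpha_k x_k (g x_k) (J x_k) v_k u_k \<and>
          v_k + u_k = 0 \<longrightarrow>
            c x_k = 0 \<and>
            (\<exists>y::real^'m. \<exists>g_r \<in> subdiff r x_k. g x_k + g_r - transpose (J x_k) *v y = 0))"
proof (intro conjI impI)
  assume "transpose (J x_k) *v c x_k = 0 \<and> c x_k \<noteq> 0"
  then show "c x_k \<noteq> 0" "transpose (J x_k) *v c x_k = 0"
    by auto
next
  assume "(transpose (J x_k) *v c x_k \<noteq> 0 \<or> c x_k = 0) \<and>
    tangential_step_ok r alpha_k x_k (g x_k) (J x_k) v_k u_k \<and> v_k + u_k = 0"
  then have not_infeasible_stationary: "transpose (J x_k) *v c x_k \<noteq> 0 \<or> c x_k = 0"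
    and tangential: "tangential_step_ok r alpha_k x_k (g x_k) (J x_k) v_k u_k"
    and u_eq: "u_k = - v_k"
    by (auto simp: add_eq_0_iff)
  have "J x_k *v v_k = 0"
    using tangential u_eq by (simp add: tangential_step_ok_def linear_neg[OF matrix_vector_mul_linear])
  then have "transpose (J x_k) *v c x_k = 0"
    using normal_step_ok_norm_less[OF step1 _ mult_pos_pos[OF kappa_pos alpha_pos]] by auto
  then show "c x_k = 0"
    using not_infeasible_stationary by simp
  then have "v_k = 0" "u_k = 0"
    using step1 u_eq by (simp_all add: normal_step_ok_def)
  then show "\<exists>y::real^'m. \<exists>g_r \<in> subdiff r x_k. g x_k + g_r - transpose (J x_k) *v y = 0"
    using tangential_step_ok_zero_imp_stationary[OF r_convex] tangential by simp
qed

end
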